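(* Let $R>0$ and let $\mathbf L\colon \mathbb R^n\times\mathbb R^m\to\mathbb R$ be an $R$-smooth convex-concave function that has a saddle point $\mathbf z^\star$. Let $\alpha>0$ satisfy $$1-3\alpha R-\alpha^2R^2-\alpha^3R^3\ge 0\quad\text{and}\quad 1-8\alpha R+\alpha^2R^2-2\alpha^3R^3\ge 0.$$ Let $\mathbf z^0\in\mathbb R^n\times\mathbb R^m$ be arbitrary, and define for $k\ge 0$ the EAG-C iterates $$\mathbf z^{k+1/2}=\mathbf z^k+\tfrac{1}{k+2}(\mathbf z^0-\mathbf z^k)-\alpha\,\mathbf G(\mathbf z^k),\qquad \mathbf z^{k+1}=\mathbf z^k+\tfrac{1}{k+2}(\mathbf z^0-\mathbf z^k)-\alpha\,\mathbf G(\mathbf z^{k+1/2}).$$ Then for all $k\ge 0$, $$\|\nabla\mathbf L(\mathbf z^k)\|^2\le \frac{4(1+\alpha R+\alpha^2R^2)}{\alpha^2(1+\alpha R)}\,\frac{\|\mathbf z^0-\mathbf z^\star\|^2}{(k+1)^2}.$$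
   Context: Write $\mathbf z=(\mathbf x,\mathbf y)\in\mathbb R^n\times\mathbb R^m$. $\mathbf L$ is convex-concave if $\mathbf L(\cdot,\mathbf y)$ is convex for each $\mathbf y$ and $\mathbf L(\mathbf x,\cdot)$ is concave for each $\mathbf x$. A saddle point $(\mathbf x^\star,\mathbf y^\star)$ satisfies $\mathbf L(\mathbf x^\star,\mathbf y)\le\mathbf L(\mathbf x^\star,\mathbf y^\star)\le\mathbf L(\mathbf x,\mathbf y^\star)$ for all $\mathbf x,\mathbf y$. For differentiable $\mathbf L$, the saddle operator is $\mathbf G(\mathbf z)=(\nabla_{\mathbf x}\mathbf L(\mathbf x,\mathbf y),-\nabla_{\mathbf y}\mathbf L(\mathbf x,\mathbf y))$. $\mathbf L$ is $R$-smooth if $\mathbf L$ is differentiable and $\mathbf G$ is $R$-Lipschitz continuous. Note $\|\nabla\mathbf L(\mathbf z)\|=\|\mathbf G(\mathbf z)\|$. *)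

theory Defs
  imports "HOL-Analysis.Analysis"
begin

definition grad_x :: "('a::euclidean_space \<times> 'b::euclidean_space \<Rightarrow> real) \<Rightarrow> 'a \<Rightarrow> 'b \<Rightarrow> 'a" where
  "grad_x L x y = (THE g. ((\<lambda>u. L (u, y)) has_derivative (\<lambda>h. h \<bullet> g)) (at x))"

definition grad_y :: "('a::euclidean_space \<times> 'b::euclidean_space \<Rightarrow> real) \<Rightarrow> 'a \<Rightarrow> 'b \<Rightarrow> 'b" where
  "grad_y L x y = (THE g. ((\<lambda>v. L (x, v)) has_derivative (\<lambda>h. h \<bullet> g)) (at y))"

definition saddle_op :: "('a::euclidean_space \<times> 'b::euclidean_space \<Rightarrow> real) \<Rightarrow> 'a \<times> 'b \<Rightarrow> 'a \<times> 'b" where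
  "saddle_op L z = (grad_x L (fst z) (snd z), - grad_y L (fst z) (snd z))"

definition convex_concave :: "('a::euclidean_space \<times> 'b::euclidean_space \<Rightarrow> real) \<Rightarrow> bool" where
  "convex_concave L \<longleftrightarrow> (\<forall>y. convex_on UNIV (\<lambda>x. L (x, y))) \<and> (\<forall>x. concave_on UNIV (\<lambda>y. L (x, y)))"

definition is_saddle_point :: "('a::euclidean_space \<times> 'b::euclidean_space \<Rightarrow> real) \<Rightarrow> 'a \<times> 'b \<Rightarrow> bool" where
  "is_saddle_point L zs \<longleftrightarrow>
     (\<forall>x y. L (fst zs, y) \<le> L zs \<and> L zs \<le> L (x, snd zs))"

definition R_smooth :: "real \<Rightarrow> ('a::euclidean_space \<times> 'b::euclidean_space \<Rightarrow> real) \<Rightarrow> bool" where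
  "R_smooth R L \<longleftrightarrow> (\<forall>z. L differentiable (at z)) \<and> R-lipschitz_on UNIV (saddle_op L)"

end

theory Submission
  imports Defs
begin

(* For a monotone R-Lipschitz operator G and \<rho> = \<alpha> R, the EAG-C iterates make
     V k = \<alpha> w (k+1) \<parallel>G (z k)\<parallel>^2 + (k+1) <G (z k), z k - z 0>,   w m = m (m+1)/2 - \<rho>/(1+\<rho>) m,
   nonincreasing. The one-step decrease combines monotonicity of G between z k and z (k+1)
   with the extragradient Lipschitz bound \<parallel>G (z (k+1)) - G (zh k)\<parallel> \<le> \<rho> \<parallel>G (zh k) - G (z k)\<parallel>,
   through an explicit sum-of-squares certificate whose coefficients have the right sign
   as soon as 1 - 8\<rho> + \<rho>^2 - 2\<rho>^3 \<ge> 0. Monotonicity at a zero z* of G gives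
   V k \<ge> \<alpha> (k+1)^2 \<parallel>G (z k)\<parallel>^2 / 2 - (k+1) \<parallel>G (z k)\<parallel> \<parallel>z 0 - z*\<parallel>, while
   V 0 \<le> \<alpha> R^2 \<parallel>z 0 - z*\<parallel>^2 / (1+\<rho>); Young's inequality turns V k \<le> V 0 into the rate.
   The saddle operator of a smooth convex-concave function is monotone by the first-order
   characterisation of convexity, and vanishes at saddle points. *)

subsection \<open>Gradients and first-order convexity\<close>

lemma gderiv_unique:
  fixes f :: "'a::real_inner \<Rightarrow> real"
  assumes "GDERIV f x :> g" and "GDERIV f x :> g'"
  shows "g = g'"
proof -
  have "(\<lambda>h. h \<bullet> g) = (\<lambda>h. h \<bullet> g')"
    using assms unfolding gderiv_def by (rule has_derivative_unique)
  then have "(g - g') \<bullet> g = (g - g') \<bullet> g'" by metis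
  then have "(g - g') \<bullet> (g - g') = 0" by (simp add: inner_diff_right)
  then show ?thesis by simp
qed

lemma differentiable_imp_gderiv:
  fixes f :: "'a::euclidean_space \<Rightarrow> real"
  assumes "f differentiable (at x)"
  shows "GDERIV f x :> (THE g. GDERIV f x :> g)"
proof -
  obtain D where D: "(f has_derivative D) (at x)"
    using assms by (auto simp: differentiable_def)
  have "D = (\<lambda>h. h \<bullet> adjoint D 1)"
    using adjoint_works[OF has_derivative_linear[OF D], of _ 1] by auto
  then have "GDERIV f x :> adjoint D 1"
    using D by (simp add: gderiv_def)
  then show ?thesis
    by (metis gderiv_unique the_equality)
qed

lemma gderiv_grad_x:
  assumes "L differentiable (at (x, y))"
  shows "GDERIV (\<lambda>u. L (u, y)) x :> grad_x L x y"
proof -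
  have "((\<lambda>u. L (u, y)) differentiable (at x))"
    using differentiable_chain_at[of "\<lambda>u. (u, y)" x L] assms by (simp add: o_def)
  then show ?thesis
    unfolding grad_x_def gderiv_def[symmetric] by (rule differentiable_imp_gderiv)
qed

lemma gderiv_grad_y:
  assumes "L differentiable (at (x, y))"
  shows "GDERIV (\<lambda>v. L (x, v)) y :> grad_y L x y"
proof -
  have "((\<lambda>v. L (x, v)) differentiable (at y))"
    using differentiable_chain_at[of "\<lambda>v. (x, v)" y L] assms by (simp add: o_def)
  then show ?thesis
    unfolding grad_y_def gderiv_def[symmetric] by (rule differentiable_imp_gderiv)
qed

lemma gderiv_eq_0_at_extremum:
  fixes f :: "'a::real_inner \<Rightarrow> real"
  assumes "GDERIV f x :> g" and "(\<forall>y. f y \<le> f x) \<or> (\<forall>y. f x \<le> f y)"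
  shows "g = 0"
proof -
  have "(\<lambda>h. h \<bullet> g) = (\<lambda>h. 0)"
    using assms by (intro differential_zero_maxmin[of x UNIV]) (auto simp: gderiv_def)
  then show ?thesis by (metis inner_eq_zero_iff)
qed

lemma convex_on_UNIV_above_tangent:
  fixes f :: "'a::real_normed_vector \<Rightarrow> real"
  assumes convex: "convex_on UNIV f" and deriv: "(f has_derivative f') (at x)"
  shows "f x + f' (y - x) \<le> f y"
proof -
  define \<phi> where "\<phi> = (\<lambda>t::real. f (x + t *\<^sub>R (y - x)))"
  have "convex_on UNIV \<phi>"
  proof (rule convex_onI)
    fix t a b :: real
    assume "0 < t" "t < 1"
    moreover have "x + ((1 - t) *\<^sub>R a + t *\<^sub>R b) *\<^sub>R (y - x)
        = (1 - t) *\<^sub>R (x + a *\<^sub>R (y - x)) + t *\<^sub>R (x + b *\<^sub>R (y - x))"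
      by (simp add: algebra_simps)
    ultimately show "\<phi> ((1 - t) *\<^sub>R a + t *\<^sub>R b) \<le> (1 - t) * \<phi> a + t * \<phi> b"
      unfolding \<phi>_def using convex_onD[OF convex, of t] by simp
  qed simp
  moreover have "(\<phi> has_field_derivative f' (y - x)) (at 0)"
  proof -
    have line: "((\<lambda>t. x + t *\<^sub>R (y - x)) has_derivative (\<lambda>t. t *\<^sub>R (y - x))) (at 0)"
      by (auto intro!: derivative_eq_intros)
    have "(f has_derivative f') (at (x + 0 *\<^sub>R (y - x)))"
      using deriv by simp
    from diff_chain_at[OF line this]
    have "(\<phi> has_derivative (\<lambda>t. f' (t *\<^sub>R (y - x)))) (at 0)"
      by (simp add: o_def \<phi>_def)
    moreover have "(\<lambda>t. f' (t *\<^sub>R (y - x))) = (\<lambda>t. f' (y - x) * t)"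
      by (simp add: linear.scaleR[OF has_derivative_linear[OF deriv]] mult.commute)
    ultimately show ?thesis by (simp add: has_field_derivative_def)
  qed
  ultimately have "f' (y - x) * (1 - 0) \<le> \<phi> 1 - \<phi> 0"
    by (intro convex_on_imp_above_tangent) auto
  then show ?thesis by (simp add: \<phi>_def)
qed

lemma convex_on_UNIV_gderiv_above_tangent:
  fixes f :: "'a::real_inner \<Rightarrow> real"
  assumes "convex_on UNIV f" and "GDERIV f x :> g"
  shows "f x + (y - x) \<bullet> g \<le> f y"
  using assms by (auto simp: gderiv_def intro: convex_on_UNIV_above_tangent)

lemma concave_on_UNIV_gderiv_below_tangent:
  fixes f :: "'a::real_inner \<Rightarrow> real"
  assumes "concave_on UNIV f" and "GDERIV f x :> g"
  shows "f y \<le> f x + (y - x) \<bullet> g"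
proof -
  have "- f x + (y - x) \<bullet> - g \<le> - f y"
    using assms by (intro convex_on_UNIV_gderiv_above_tangent[of "\<lambda>x. - f x"])
      (auto simp: concave_on_def GDERIV_minus)
  then show ?thesis by simp
qed

subsection \<open>The saddle operator\<close>

definition monotone_operator :: "('v::real_inner \<Rightarrow> 'v) \<Rightarrow> bool" where
  "monotone_operator G \<longleftrightarrow> (\<forall>z z'. 0 \<le> (G z - G z') \<bullet> (z - z'))"

lemma monotone_operator_saddle_op:
  fixes L :: "'a::euclidean_space \<times> 'b::euclidean_space \<Rightarrow> real"
  assumes diff: "\<And>z. L differentiable (at z)" and cc: "convex_concave L"
  shows "monotone_operator (saddle_op L)"
  unfolding monotone_operator_def
proof (intro allI)
  fix z z' :: "'a \<times> 'b"
  obtain x y x' y' where z: "z = (x, y)" and z': "z' = (x', y')" by fastforce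
  have cvx: "convex_on UNIV (\<lambda>x. L (x, y))" for y
    using cc by (simp add: convex_concave_def)
  have ccv: "concave_on UNIV (\<lambda>y. L (x, y))" for x
    using cc by (simp add: convex_concave_def)
  note gx = gderiv_grad_x[OF diff] and gy = gderiv_grad_y[OF diff]
  have "L (x, y) + (x' - x) \<bullet> grad_x L x y \<le> L (x', y)"
    and "L (x', y') + (x - x') \<bullet> grad_x L x' y' \<le> L (x, y')"
    by (rule convex_on_UNIV_gderiv_above_tangent[OF cvx gx])+
  moreover have "L (x, y') \<le> L (x, y) + (y' - y) \<bullet> grad_y L x y"
    and "L (x', y) \<le> L (x', y') + (y - y') \<bullet> grad_y L x' y'"
    by (rule concave_on_UNIV_gderiv_below_tangent[OF ccv gy])+
  ultimately show "0 \<le> (saddle_op L z - saddle_op L z') \<bullet> (z - z')"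
    by (simp add: z z' saddle_op_def inner_diff_left inner_diff_right inner_commute)
qed

lemma saddle_op_eq_0_at_saddle_point:
  assumes diff: "\<And>z. L differentiable (at z)" and saddle: "is_saddle_point L zs"
  shows "saddle_op L zs = 0"
proof -
  obtain x y where zs: "zs = (x, y)" by fastforce
  have "grad_x L x y = 0"
    using saddle by (intro gderiv_eq_0_at_extremum[OF gderiv_grad_x[OF diff]])
      (auto simp: is_saddle_point_def zs)
  moreover have "grad_y L x y = 0"
    using saddle by (intro gderiv_eq_0_at_extremum[OF gderiv_grad_y[OF diff]])
      (auto simp: is_saddle_point_def zs)
  ultimately show ?thesis by (simp add: saddle_op_def zs zero_prod_def)
qed

subsection \<open>The one-step inequality\<close>

definition eag_weight :: "real \<Rightarrow> real \<Rightarrow> real" where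
  "eag_weight r m = m * (m + 1) / 2 - r / (1 + r) * m"

lemma eag_weight_ge_half_square:
  assumes "0 \<le> r" and "r \<le> 1" and "0 \<le> m"
  shows "m^2 / 2 \<le> eag_weight r m"
proof -
  have "r / (1 + r) \<le> 1 / 2" using assms by (simp add: field_simps)
  then have "r / (1 + r) * m \<le> 1 / 2 * m" using assms by (intro mult_right_mono)
  then show ?thesis by (simp add: eag_weight_def power2_eq_square field_simps)
qed

lemma eag_step_size_le_one_seventh:
  fixes r :: real
  assumes "0 < r" and "0 \<le> 1 - 8*r + r^2 - 2*r^3"
  shows "r \<le> 1/7"
proof (cases "r \<le> 1")
  case True
  then have "r^2 \<le> r" using \<open>0 < r\<close> by (simp add: power2_eq_square mult_left_le)
  moreover have "0 < r^3" using \<open>0 < r\<close> by simp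
  ultimately show ?thesis using assms(2) by linarith
next
  case False
  then have "r^2 < r^3" by (simp add: power2_eq_square power3_eq_cube)
  moreover have "0 \<le> r^2" by simp
  ultimately show ?thesis using assms False by linarith
qed

lemma eag_weight_step_identity:
  fixes a c h :: "'v::real_inner" and n r :: real
  assumes "r \<noteq> -1"
  shows "4*r*(1 + r) * (eag_weight r (n + 1) * (a \<bullet> a) - eag_weight r n * (c \<bullet> c)
            - (n + 1)^2 * (a \<bullet> h) + n * (n + 1) * (c \<bullet> h))
    = (n + 1) * r * (n*(-2 + 7*r - 4*r^2 + 3*r^3) + r*(1 + r)^2) * (norm (h - c))^2
      - (norm ((2*r) *\<^sub>R c + (2*r*(n + 1)) *\<^sub>R (h - c) - ((n + 1)*(1 - r)) *\<^sub>R (a - h)))^2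
      - 2*n*(n + 1)*(1 - r) * (norm ((a - h) + r *\<^sub>R (h - c)))^2
      - (n + 1) * (n*(3 - 2*r + 3*r^2) + (1 + r)^2) * ((r * norm (h - c))^2 - (norm (a - h))^2)"
proof -
  have weight: "4*r*(1 + r) * eag_weight r m = 2*r*(1 + r)*m*(m + 1) - 4*r^2*m" for m
    using assms by (simp add: eag_weight_def field_simps power2_eq_square)
  have "4*r*(1 + r) * (eag_weight r (n + 1) * (a \<bullet> a) - eag_weight r n * (c \<bullet> c)
            - (n + 1)^2 * (a \<bullet> h) + n * (n + 1) * (c \<bullet> h))
      = (4*r*(1 + r) * eag_weight r (n + 1)) * (a \<bullet> a) - (4*r*(1 + r) * eag_weight r n) * (c \<bullet> c)
            - 4*r*(1 + r) * (n + 1)^2 * (a \<bullet> h) + 4*r*(1 + r) * n * (n + 1) * (c \<bullet> h)"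
    by (simp add: algebra_simps)
  also have "\<dots> = (n + 1) * r * (n*(-2 + 7*r - 4*r^2 + 3*r^3) + r*(1 + r)^2) * (norm (h - c))^2
      - (norm ((2*r) *\<^sub>R c + (2*r*(n + 1)) *\<^sub>R (h - c) - ((n + 1)*(1 - r)) *\<^sub>R (a - h)))^2
      - 2*n*(n + 1)*(1 - r) * (norm ((a - h) + r *\<^sub>R (h - c)))^2
      - (n + 1) * (n*(3 - 2*r + 3*r^2) + (1 + r)^2) * ((r * norm (h - c))^2 - (norm (a - h))^2)"
    unfolding weight power_mult_distrib power2_norm_eq_inner
    by (simp add: inner_diff_left inner_diff_right inner_commute algebra_simps
        power2_eq_square power3_eq_cube)
  finally show ?thesis .
qed

lemma eag_weight_step_nonpos:
  fixes a c h :: "'v::real_inner" and n r :: real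
  assumes n: "1 \<le> n" and r: "0 < r" and step_size: "0 \<le> 1 - 8*r + r^2 - 2*r^3"
    and lip: "norm (a - h) \<le> r * norm (h - c)"
  shows "eag_weight r (n + 1) * (a \<bullet> a) - eag_weight r n * (c \<bullet> c)
           - (n + 1)^2 * (a \<bullet> h) + n * (n + 1) * (c \<bullet> h) \<le> 0"
proof -
  have r7: "r \<le> 1/7" using eag_step_size_le_one_seventh[OF r step_size] .
  have "r \<noteq> -1" using r by simp
  have cubic: "n*(-2 + 7*r - 4*r^2 + 3*r^3) + r*(1 + r)^2 \<le> 0"
  proof -
    define p where "p = -2 + 7*r - 4*r^2 + 3*r^3"
    have "r^3 \<le> r" "0 \<le> r^2"
      using r r7 by (simp_all add: power3_eq_cube mult_le_one)
    then have "p \<le> 0" unfolding p_def using r7 by linarith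
    then have "n * p \<le> 1 * p" using mult_right_mono_neg[OF n] by blast
    moreover have "p + r*(1 + r)^2 = -2 * (1 - 8*r + r^2 - 2*r^3) - 8*r"
      unfolding p_def by (simp add: algebra_simps power2_eq_square power3_eq_cube)
    moreover have "-2 * (1 - 8*r + r^2 - 2*r^3) - 8*r \<le> 0" using step_size r by simp
    ultimately show ?thesis unfolding p_def[symmetric] by linarith
  qed
  have "0 \<le> (n + 1) * (n*(3 - 2*r + 3*r^2) + (1 + r)^2)"
    using n r7 by simp
  moreover have "(norm (a - h))^2 \<le> (r * norm (h - c))^2"
    using lip by (simp add: power_mono)
  ultimately have "0 \<le> (n + 1) * (n*(3 - 2*r + 3*r^2) + (1 + r)^2) * ((r * norm (h - c))^2 - (norm (a - h))^2)"
    by simp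
  moreover have "0 \<le> 2*n*(n + 1)*(1 - r) * (norm ((a - h) + r *\<^sub>R (h - c)))^2"
    using n r7 by simp
  moreover have "(n + 1) * r * (n*(-2 + 7*r - 4*r^2 + 3*r^3) + r*(1 + r)^2) * (norm (h - c))^2 \<le> 0"
    using n r by (intro mult_nonpos_nonneg mult_nonneg_nonpos cubic) auto
  ultimately have "4*r*(1 + r) * (eag_weight r (n + 1) * (a \<bullet> a) - eag_weight r n * (c \<bullet> c)
            - (n + 1)^2 * (a \<bullet> h) + n * (n + 1) * (c \<bullet> h)) \<le> 0"
    unfolding eag_weight_step_identity[OF \<open>r \<noteq> -1\<close>] by (smt (verit) zero_le_power2)
  then show ?thesis using r by (simp add: mult_le_0_iff)
qed

subsection \<open>EAG-C for monotone Lipschitz operators\<close>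

locale eag_c =
  fixes G :: "'v::real_inner \<Rightarrow> 'v" and R \<alpha> :: real and z zh :: "nat \<Rightarrow> 'v"
  assumes monotone: "monotone_operator G"
    and lipschitz: "R-lipschitz_on UNIV G"
    and R_pos: "0 < R" and alpha_pos: "0 < \<alpha>"
    and step_size: "0 \<le> 1 - 8*(\<alpha>*R) + (\<alpha>*R)^2 - 2*(\<alpha>*R)^3"
    and half: "\<And>k. zh k = z k + (1 / (real k + 2)) *\<^sub>R (z 0 - z k) - \<alpha> *\<^sub>R G (z k)"
    and full: "\<And>k. z (Suc k) = z k + (1 / (real k + 2)) *\<^sub>R (z 0 - z k) - \<alpha> *\<^sub>R G (zh k)"
begin

definition lyapunov :: "nat \<Rightarrow> real" where
  "lyapunov k = \<alpha> * eag_weight (\<alpha>*R) (real k + 1) * (norm (G (z k)))^2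
                + (real k + 1) * (G (z k) \<bullet> (z k - z 0))"

lemma norm_G_diff_le: "norm (G x - G y) \<le> R * norm (x - y)"
  using lipschitz_onD[OF lipschitz] by (simp add: dist_norm)

lemma full_minus_half: "z (Suc k) - zh k = \<alpha> *\<^sub>R (G (z k) - G (zh k))"
  by (simp add: half full algebra_simps)

lemma anchored_full:
  "(real k + 2) *\<^sub>R (z (Suc k) - z 0) = (real k + 1) *\<^sub>R (z k - z 0) - (\<alpha> * (real k + 2)) *\<^sub>R G (zh k)"
proof -
  have "real k + 2 \<noteq> 0" by simp
  then show ?thesis by (simp add: full algebra_simps scaleR_2)
qed

lemma lyapunov_Suc_le: "lyapunov (Suc k) \<le> lyapunov k"
proof -
  define n where "n = real k + 1"
  define a c h where "a = G (z (Suc k))" and "c = G (z k)" and "h = G (zh k)"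
  have n: "1 \<le> n" by (simp add: n_def)
  have anchored: "(n + 1) *\<^sub>R (z (Suc k) - z 0) = n *\<^sub>R (z k - z 0) - (\<alpha> * (n + 1)) *\<^sub>R h"
    using anchored_full[of k] by (simp add: n_def h_def add.assoc)
  have "norm (a - h) \<le> R * norm (z (Suc k) - zh k)"
    unfolding a_def h_def by (rule norm_G_diff_le)
  also have "\<dots> = (\<alpha>*R) * norm (h - c)"
    using alpha_pos by (simp add: full_minus_half h_def c_def norm_minus_commute)
  finally have weight_step: "eag_weight (\<alpha>*R) (n + 1) * (a \<bullet> a) - eag_weight (\<alpha>*R) n * (c \<bullet> c)
      - (n + 1)^2 * (a \<bullet> h) + n * (n + 1) * (c \<bullet> h) \<le> 0"
    using R_pos alpha_pos by (intro eag_weight_step_nonpos[OF n _ step_size]) auto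
  moreover have "n * ((a - c) \<bullet> (z k - z 0)) \<le> - \<alpha> * n * (n + 1) * ((a - c) \<bullet> h)"
  proof -
    have "(n + 1) *\<^sub>R (z (Suc k) - z k) = (n + 1) *\<^sub>R (z (Suc k) - z 0) - (n + 1) *\<^sub>R (z k - z 0)"
      by (simp add: algebra_simps)
    also have "\<dots> = - (z k - z 0) - (\<alpha> * (n + 1)) *\<^sub>R h"
      unfolding anchored by (simp add: algebra_simps)
    finally have step: "(n + 1) *\<^sub>R (z (Suc k) - z k) = - (z k - z 0) - (\<alpha> * (n + 1)) *\<^sub>R h" .
    have "0 \<le> (n + 1) * ((a - c) \<bullet> (z (Suc k) - z k))"
      using monotone n unfolding monotone_operator_def a_def c_def by simp
    also have "\<dots> = (a - c) \<bullet> ((n + 1) *\<^sub>R (z (Suc k) - z k))" by simp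
    also have "\<dots> = - ((a - c) \<bullet> (z k - z 0)) - \<alpha> * (n + 1) * ((a - c) \<bullet> h)"
      unfolding step by (simp add: inner_diff_right)
    finally have "0 \<le> - ((a - c) \<bullet> (z k - z 0)) - \<alpha> * (n + 1) * ((a - c) \<bullet> h)" .
    then have "0 \<le> n * (- ((a - c) \<bullet> (z k - z 0)) - \<alpha> * (n + 1) * ((a - c) \<bullet> h))"
      using n by simp
    then show ?thesis by (simp add: algebra_simps)
  qed
  moreover have "lyapunov (Suc k) = \<alpha> * eag_weight (\<alpha>*R) (n + 1) * (a \<bullet> a)
      + n * (a \<bullet> (z k - z 0)) - \<alpha> * (n + 1) * (a \<bullet> h)"
  proof -
    have "lyapunov (Suc k) = \<alpha> * eag_weight (\<alpha>*R) (n + 1) * (a \<bullet> a) + a \<bullet> ((n + 1) *\<^sub>R (z (Suc k) - z 0))"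
      unfolding lyapunov_def by (simp add: n_def a_def power2_norm_eq_inner add_ac)
    then show ?thesis unfolding anchored by (simp add: inner_diff_right)
  qed
  moreover have "lyapunov k = \<alpha> * eag_weight (\<alpha>*R) n * (c \<bullet> c) + n * (c \<bullet> (z k - z 0))"
    unfolding lyapunov_def by (simp add: n_def c_def power2_norm_eq_inner)
  ultimately have "lyapunov (Suc k) - lyapunov k
      \<le> \<alpha> * (eag_weight (\<alpha>*R) (n + 1) * (a \<bullet> a) - eag_weight (\<alpha>*R) n * (c \<bullet> c))
         - \<alpha> * n * (n + 1) * ((a - c) \<bullet> h) - \<alpha> * (n + 1) * (a \<bullet> h)"
    by (simp add: inner_diff_left algebra_simps)
  also have "\<dots> = \<alpha> * (eag_weight (\<alpha>*R) (n + 1) * (a \<bullet> a) - eag_weight (\<alpha>*R) n * (c \<bullet> c)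
      - (n + 1)^2 * (a \<bullet> h) + n * (n + 1) * (c \<bullet> h))"
    by (simp add: inner_diff_left algebra_simps power2_eq_square)
  also have "\<dots> \<le> 0"
    using weight_step alpha_pos by (simp add: mult_nonneg_nonpos)
  finally show ?thesis by simp
qed

lemma lyapunov_0_le:
  assumes "G zs = 0"
  shows "lyapunov 0 \<le> \<alpha> / (1 + \<alpha>*R) * (R * norm (z 0 - zs))^2"
proof -
  have "0 < 1 + \<alpha>*R" using mult_pos_pos[OF alpha_pos R_pos] by simp
  then have "eag_weight (\<alpha>*R) 1 = 1 / (1 + \<alpha>*R)"
    by (simp add: eag_weight_def field_simps)
  then have "lyapunov 0 = \<alpha> / (1 + \<alpha>*R) * (norm (G (z 0)))^2"
    by (simp add: lyapunov_def)
  also have "\<dots> \<le> \<alpha> / (1 + \<alpha>*R) * (R * norm (z 0 - zs))^2"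
    using norm_G_diff_le[of "z 0" zs] assms alpha_pos R_pos
    by (intro mult_left_mono power_mono) auto
  finally show ?thesis .
qed

lemma lyapunov_lower_bound:
  assumes "G zs = 0"
  shows "\<alpha> * (real k + 1)^2 * (norm (G (z k)))^2 / 2
           - (real k + 1) * (norm (G (z k)) * norm (z 0 - zs)) \<le> lyapunov k"
proof -
  define m where "m = real k + 1"
  have "\<alpha>*R \<le> 1"
    using eag_step_size_le_one_seventh[OF _ step_size] alpha_pos R_pos by simp
  then have "m^2 / 2 \<le> eag_weight (\<alpha>*R) m"
    using alpha_pos R_pos by (intro eag_weight_ge_half_square) (auto simp: m_def)
  then have "\<alpha> * (m^2 / 2) * (norm (G (z k)))^2 \<le> \<alpha> * eag_weight (\<alpha>*R) m * (norm (G (z k)))^2"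
    using alpha_pos by (intro mult_right_mono mult_left_mono) auto
  moreover have "- (norm (G (z k)) * norm (z 0 - zs)) \<le> G (z k) \<bullet> (z k - z 0)"
  proof -
    have "0 \<le> G (z k) \<bullet> (z k - zs)"
      using monotone assms unfolding monotone_operator_def by (metis diff_zero)
    moreover have "G (z k) \<bullet> (z 0 - zs) \<le> norm (G (z k)) * norm (z 0 - zs)"
      by (rule norm_cauchy_schwarz)
    moreover have "G (z k) \<bullet> (z k - z 0) = G (z k) \<bullet> (z k - zs) - G (z k) \<bullet> (z 0 - zs)"
      by (simp add: inner_diff_right)
    ultimately show ?thesis by linarith
  qed
  then have "m * - (norm (G (z k)) * norm (z 0 - zs)) \<le> m * (G (z k) \<bullet> (z k - z 0))"
    by (rule mult_left_mono) (simp add: m_def)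
  ultimately show ?thesis
    unfolding lyapunov_def m_def by simp
qed

theorem norm_G_iterate_bound:
  assumes "G zs = 0"
  shows "(norm (G (z k)))^2
           \<le> 4 * (1 + \<alpha>*R + \<alpha>^2*R^2) / (\<alpha>^2 * (1 + \<alpha>*R)) * (norm (z 0 - zs))^2 / (real k + 1)^2"
proof -
  define m g d where "m = real k + 1" and "g = norm (G (z k))" and "d = norm (z 0 - zs)"
  have "decseq lyapunov" by (rule decseq_SucI) (rule lyapunov_Suc_le)
  then have "lyapunov k \<le> lyapunov 0" by (simp add: decseqD)
  moreover have "m * (g * d) \<le> \<alpha> * m^2 * g^2 / 4 + d^2 / \<alpha>"
  proof -
    have "0 \<le> \<alpha> * (m * g / 2 - d / \<alpha>)^2" using alpha_pos by simp
    also have "\<dots> = \<alpha> * m^2 * g^2 / 4 - m * (g * d) + d^2 / \<alpha>"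
      using alpha_pos by (simp add: power2_eq_square field_simps)
    finally show ?thesis by linarith
  qed
  ultimately have "\<alpha> * m^2 * g^2 / 4 \<le> \<alpha> / (1 + \<alpha>*R) * (R * d)^2 + d^2 / \<alpha>"
    using lyapunov_lower_bound[OF assms, of k] lyapunov_0_le[OF assms]
    unfolding m_def g_def d_def by linarith
  then have "m^2 * g^2 \<le> 4 / \<alpha> * (\<alpha> / (1 + \<alpha>*R) * (R * d)^2 + d^2 / \<alpha>)"
    using alpha_pos by (simp add: field_simps)
  also have "\<dots> = 4 * (1 + \<alpha>*R + \<alpha>^2*R^2) / (\<alpha>^2 * (1 + \<alpha>*R)) * d^2"
    using alpha_pos mult_pos_pos[OF alpha_pos R_pos]
    by (simp add: field_simps power2_eq_square add_pos_pos)
  finally have "g^2 * m^2 \<le> 4 * (1 + \<alpha>*R + \<alpha>^2*R^2) / (\<alpha>^2 * (1 + \<alpha>*R)) * d^2"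
    by (simp add: mult.commute)
  moreover have "0 < m^2" by (simp add: m_def)
  ultimately show ?thesis
    unfolding m_def g_def d_def by (simp only: pos_le_divide_eq)
qed

end

subsection \<open>Convex-concave saddle problems\<close>

theorem theorem1:
  fixes L :: "'a::euclidean_space \<times> 'b::euclidean_space \<Rightarrow> real"
    and R \<alpha> :: real
    and zs :: "'a \<times> 'b"
    and z zh :: "nat \<Rightarrow> 'a \<times> 'b"
  assumes R_pos: "R > 0"
    and smooth: "R_smooth R L"
    and cc: "convex_concave L"
    and saddle: "is_saddle_point L zs"
    and alpha_pos: "\<alpha> > 0"
    and c1: "1 - 3*\<alpha>*R - \<alpha>^2*R^2 - \<alpha>^3*R^3 \<ge> 0"
    and c2: "1 - 8*\<alpha>*R + \<alpha>^2*R^2 - 2*\<alpha>^3*R^3 \<ge> 0"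
    and half: "\<And>k. zh k = z k + (1 / (real k + 2)) *\<^sub>R (z 0 - z k) - \<alpha> *\<^sub>R saddle_op L (z k)"
    and full: "\<And>k. z (Suc k) = z k + (1 / (real k + 2)) *\<^sub>R (z 0 - z k) - \<alpha> *\<^sub>R saddle_op L (zh k)"
  shows "\<forall>k. (norm (saddle_op L (z k)))^2
           \<le> 4 * (1 + \<alpha>*R + \<alpha>^2*R^2) / (\<alpha>^2 * (1 + \<alpha>*R)) * (norm (z 0 - zs))^2 / (real k + 1)^2"
proof -
  have diff: "\<And>z. L differentiable (at z)"
    using smooth unfolding R_smooth_def by blast
  interpret eag_c "saddle_op L" R \<alpha> z zh
  proof
    show "monotone_operator (saddle_op L)"
      using monotone_operator_saddle_op[OF diff cc] .
    show "R-lipschitz_on UNIV (saddle_op L)"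
      using smooth by (simp add: R_smooth_def)
    show "0 \<le> 1 - 8*(\<alpha>*R) + (\<alpha>*R)^2 - 2*(\<alpha>*R)^3"
      using c2 by (simp add: power_mult_distrib mult.assoc)
  qed (fact R_pos alpha_pos half full)+
  show ?thesis
    using norm_G_iterate_bound[OF saddle_op_eq_0_at_saddle_point[OF diff saddle]] by blast
qed

end
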